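(* Let $d\ge1$ and let $H\subseteq\{0,\dots,d\}^{d+1}$ be an octahedral system with $|H|\le d^2$. Then $H$ contains no isolated edge; that is, for every $e\in H$ there exists $f\in H$, $f\neq e$, that differs from $e$ in exactly one coordinate.
   Context: Fix $d\ge1$. There are $d+1$ colours $0,1,\dots,d$, and each colour class consists of $d+1$ points labelled $0,\dots,d$. An edge is a tuple $e=(e_0,\dots,e_d)\in\{0,\dots,d\}^{d+1}$ (point $e_i$ of colour $i$ for each $i$); a hypergraph is a set $H$ of such tuples. For a colour $i$, an $\hat i$-transversal is a tuple $t=(t_k)_{k\ne i}\in\{0,\dots,d\}^{\{0,\dots,d\}\setminus\{i\}}$ (one point of every colour except $i$); an $\hat i$-octahedron is a pair of $\hat i$-transversals $t,t'$ with $t_k\neq t'_k$ for all $k\ne i$. $H$ is an octahedral system if for every colour $i$, every $\hat i$-octahedron $(t,t')$, the parity of $|\{e\in H: e_i=s,\ e_k\in\{t_k,t'_k\}\ \forall k\ne i\}|$ is the same for all $s\in\{0,\dots,d\}$. An edge $e\in H$ is isolated in $H$ if no other edge of $H$ differs from $e$ in exactly one coordinate. *)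

theory Defs
  imports "HOL-Library.FuncSet"
begin

text \<open>Colours and point labels are both {0..d}. An edge is a function
  from colours {..d} to points {..d} (extensional, as in PiE).\<close>

definition edges :: "nat \<Rightarrow> (nat \<Rightarrow> nat) set" where
  "edges d = (\<Pi>\<^sub>E k\<in>{..d}. {..d})"

definition transversals :: "nat \<Rightarrow> nat \<Rightarrow> (nat \<Rightarrow> nat) set" where
  "transversals d i = (\<Pi>\<^sub>E k\<in>{..d} - {i}. {..d})"

definition is_octahedron :: "nat \<Rightarrow> nat \<Rightarrow> (nat \<Rightarrow> nat) \<Rightarrow> (nat \<Rightarrow> nat) \<Rightarrow> bool" where
  "is_octahedron d i t t' \<longleftrightarrow> t \<in> transversals d i \<and> t' \<in> transversals d i \<and>
     (\<forall>k\<in>{..d} - {i}. t k \<noteq> t' k)"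

definition octa_count :: "nat \<Rightarrow> (nat \<Rightarrow> nat) set \<Rightarrow> nat \<Rightarrow> (nat \<Rightarrow> nat) \<Rightarrow> (nat \<Rightarrow> nat) \<Rightarrow> nat \<Rightarrow> nat" where
  "octa_count d H i t t' s = card {e \<in> H. e i = s \<and> (\<forall>k\<in>{..d} - {i}. e k \<in> {t k, t' k})}"

definition octahedral_system :: "nat \<Rightarrow> (nat \<Rightarrow> nat) set \<Rightarrow> bool" where
  "octahedral_system d H \<longleftrightarrow> H \<subseteq> edges d \<and>
     (\<forall>i\<in>{..d}. \<forall>t t'. is_octahedron d i t t' \<longrightarrow>
        (\<forall>s\<in>{..d}. \<forall>s'\<in>{..d}. even (octa_count d H i t t' s) = even (octa_count d H i t t' s')))"

definition differ_in_one :: "nat \<Rightarrow> (nat \<Rightarrow> nat) \<Rightarrow> (nat \<Rightarrow> nat) \<Rightarrow> bool" where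
  "differ_in_one d e f \<longleftrightarrow> card {k\<in>{..d}. e k \<noteq> f k} = 1"

definition isolated :: "nat \<Rightarrow> (nat \<Rightarrow> nat) set \<Rightarrow> (nat \<Rightarrow> nat) \<Rightarrow> bool" where
  "isolated d H e \<longleftrightarrow> e \<in> H \<and> \<not> (\<exists>f\<in>H. f \<noteq> e \<and> differ_in_one d e f)"

end

theory Submission
  imports Defs
begin

text \<open>
  Suppose the edge e of the octahedral system H is isolated.
  Call a an antipode of e if a is an edge with a k \<noteq> e k for every colour k; there are
  exactly d^(d+1) antipodes. For an antipode a, the transversals obtained by dropping
  colour 0 from e and from a form a 0-octahedron, so the number of edges of H inside the
  box \<Pi>_k {e k, a k} with colour-0 point a 0 has the same parity as the number with
  colour-0 point e 0. The latter count includes e, hence the box contains an edge f \<noteq> e.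
  Since e is isolated, every f \<in> H - {e} differs from e in two colours p \<noteq> q, and such
  an f lies in the box of at most d^(d-1) antipodes (those with a p = f p, a q = f q).
  Hence d^(d+1) \<le> (|H| - 1) d^(d-1), i.e. |H| > d^2.
\<close>

lemma card_PiE_fixed_coords_le:
  assumes "finite I" and "J \<subseteq> I" and "\<And>k. k \<in> I \<Longrightarrow> finite (B k)"
  shows "card {a \<in> Pi\<^sub>E I B. \<forall>k\<in>J. a k = c k} \<le> (\<Prod>k\<in>I - J. card (B k))"
proof -
  let ?S = "{a \<in> Pi\<^sub>E I B. \<forall>k\<in>J. a k = c k}"
  have inj: "inj_on (\<lambda>a. restrict a (I - J)) ?S"
  proof (rule inj_onI)
    fix a b assume a: "a \<in> ?S" and b: "b \<in> ?S"
      and eq: "restrict a (I - J) = restrict b (I - J)"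
    show "a = b"
    proof (rule PiE_ext)
      show "a \<in> Pi\<^sub>E I B" "b \<in> Pi\<^sub>E I B" using a b by auto
      fix k assume "k \<in> I"
      then show "a k = b k"
        using a b fun_cong[OF eq, of k] by (cases "k \<in> J") auto
    qed
  qed
  have "(\<lambda>a. restrict a (I - J)) ` ?S \<subseteq> Pi\<^sub>E (I - J) B"
    by (force simp: restrict_PiE_iff dest: PiE_mem)
  moreover have "finite (Pi\<^sub>E (I - J) B)"
    using assms by (intro finite_PiE) auto
  ultimately have "card ?S \<le> card (Pi\<^sub>E (I - J) B)"
    using card_inj_on_le[OF inj] by blast
  also have "\<dots> = (\<Prod>k\<in>I - J. card (B k))"
    using assms(1) by (simp add: card_PiE)
  finally show ?thesis .
qed

lemma octahedral_parity:
  assumes "octahedral_system d H" and "i \<le> d" and "is_octahedron d i t t'"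
    and "s \<le> d" and "s' \<le> d"
  shows "even (octa_count d H i t t' s) \<longleftrightarrow> even (octa_count d H i t t' s')"
  using assms unfolding octahedral_system_def by (meson atMost_iff)

definition antipodes :: "nat \<Rightarrow> (nat \<Rightarrow> nat) \<Rightarrow> (nat \<Rightarrow> nat) set" where
  "antipodes d e = (\<Pi>\<^sub>E k\<in>{..d}. {..d} - {e k})"

lemma card_antipodes:
  assumes "e \<in> edges d"
  shows "card (antipodes d e) = d ^ (d + 1)"
proof -
  have "card (antipodes d e) = (\<Prod>k\<in>{..d}. card ({..d} - {e k}))"
    by (simp add: antipodes_def card_PiE)
  also have "\<dots> = (\<Prod>k\<in>{..d}. d)"
    using assms by (intro prod.cong) (auto simp: edges_def PiE_iff)
  finally show ?thesis by simp
qed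

text \<open>The octahedron is the pair of transversals
  obtained from e and a by forgetting colour 0; if no edge of the box has colour-0 point
  a 0, the edges of the box with colour-0 point e 0 are even in number, and e is one of them.\<close>

lemma antipodal_box_contains_edge:
  assumes oct: "octahedral_system d H" and fin: "finite H" and eH: "e \<in> H"
    and a: "a \<in> antipodes d e"
  shows "\<exists>f\<in>H - {e}. \<forall>k\<le>d. f k = e k \<or> f k = a k"
proof -
  define t where "t = restrict e ({..d} - {0})"
  define t' where "t' = restrict a ({..d} - {0})"
  define C where "C s = {f \<in> H. f 0 = s \<and> (\<forall>k\<in>{..d} - {0}. f k \<in> {t k, t' k})}" for s
  have e_edge: "\<forall>k\<le>d. e k \<le> d"
    using oct eH by (auto simp: octahedral_system_def edges_def PiE_iff)
  have a_anti: "\<forall>k\<le>d. a k \<le> d \<and> a k \<noteq> e k"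
    using a by (auto simp: antipodes_def PiE_iff)
  have "t \<in> transversals d 0" "t' \<in> transversals d 0"
    using e_edge a_anti by (auto simp: transversals_def t_def t'_def restrict_PiE_iff)
  moreover have "t k \<noteq> t' k" if k: "k \<in> {..d} - {0}" for k
  proof -
    have "a k \<noteq> e k" using a_anti k by simp
    then show ?thesis using k by (simp add: t_def t'_def)
  qed
  ultimately have "is_octahedron d 0 t t'"
    by (simp add: is_octahedron_def)
  then have "even (octa_count d H 0 t t' (e 0)) \<longleftrightarrow> even (octa_count d H 0 t t' (a 0))"
    using e_edge a_anti by (intro octahedral_parity[OF oct]) auto
  then have parity: "even (card (C (e 0))) \<longleftrightarrow> even (card (C (a 0)))"
    by (simp only: octa_count_def C_def)
  have in_box: "\<forall>k\<le>d. f k = e k \<or> f k = a k" if f: "f \<in> C s" and s: "s = e 0 \<or> s = a 0" for f s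
  proof (intro allI impI)
    fix k assume "k \<le> d"
    then show "f k = e k \<or> f k = a k"
      using f s by (cases "k = 0") (auto simp: C_def t_def t'_def)
  qed
  show ?thesis
  proof (cases "C (a 0) = {}")
    case False
    then obtain f where f: "f \<in> C (a 0)" by blast
    then have "f 0 \<noteq> e 0" using a_anti by (simp add: C_def)
    then show ?thesis using f in_box[OF f] by (auto simp: C_def)
  next
    case True
    then have "C (e 0) \<noteq> {e}" using parity by auto
    moreover have "e \<in> C (e 0)" using eH by (simp add: C_def t_def t'_def)
    ultimately obtain f where "f \<in> C (e 0)" "f \<noteq> e" by blast
    then show ?thesis using in_box by (auto simp: C_def)
  qed
qed

lemma differ_in_two_colours:
  assumes "e \<in> edges d" and "f \<in> edges d" and "f \<noteq> e" and "\<not> differ_in_one d e f"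
  shows "\<exists>p\<le>d. \<exists>q\<le>d. p \<noteq> q \<and> e p \<noteq> f p \<and> e q \<noteq> f q"
proof -
  define D where "D = {k\<in>{..d}. e k \<noteq> f k}"
  have "D \<noteq> {}"
    using assms(1-3) PiE_ext[of e "{..d}" "\<lambda>_. {..d}" f] by (auto simp: D_def edges_def)
  moreover have "card D \<noteq> 1" using assms(4) by (simp add: differ_in_one_def D_def)
  ultimately obtain p q where "p \<in> D" "q \<in> D" "p \<noteq> q"
    by (metis is_singletonI' is_singleton_altdef)
  then show ?thesis by (auto simp: D_def)
qed

text \<open>An edge f that differs from e in the colours p \<noteq> q lies in the boxes of at most
  d^(d-1) antipodes of e, since such an antipode must agree with f at p and q.\<close>

lemma antipodes_through_edge_le:
  assumes "e \<in> edges d" and "p \<le> d" and "q \<le> d" and "p \<noteq> q"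
  shows "card {a \<in> antipodes d e. a p = f p \<and> a q = f q} \<le> d ^ (d - 1)"
proof -
  have "card {a \<in> antipodes d e. a p = f p \<and> a q = f q}
      \<le> (\<Prod>k\<in>{..d} - {p, q}. card ({..d} - {e k}))"
    using card_PiE_fixed_coords_le[of "{..d}" "{p, q}" "\<lambda>k. {..d} - {e k}" f] assms(2,3)
    by (simp add: antipodes_def)
  also have "\<dots> = (\<Prod>k\<in>{..d} - {p, q}. d)"
    using assms(1) by (intro prod.cong) (auto simp: edges_def PiE_iff)
  also have "\<dots> = d ^ (d - 1)"
    using assms(2-4) by (simp add: card_Diff_subset)
  finally show ?thesis .
qed

lemma isolated_edge_forces_many_edges:
  assumes d: "d \<ge> 1" and oct: "octahedral_system d H" and iso: "isolated d H e"
  shows "d ^ 2 < card H"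
proof -
  have H_edges: "H \<subseteq> edges d" using oct by (simp add: octahedral_system_def)
  then have fin: "finite H" by (rule finite_subset) (simp add: edges_def finite_PiE)
  have eH: "e \<in> H" using iso by (simp add: isolated_def)
  have e_edge: "e \<in> edges d" using H_edges eH by blast
  have "\<forall>f\<in>H - {e}. \<exists>p\<le>d. \<exists>q\<le>d. p \<noteq> q \<and> e p \<noteq> f p \<and> e q \<noteq> f q"
  proof
    fix f assume "f \<in> H - {e}"
    then have "f \<in> edges d" "f \<noteq> e" "\<not> differ_in_one d e f"
      using H_edges iso by (auto simp: isolated_def)
    then show "\<exists>p\<le>d. \<exists>q\<le>d. p \<noteq> q \<and> e p \<noteq> f p \<and> e q \<noteq> f q"
      by (rule differ_in_two_colours[OF e_edge])
  qed
  then obtain P Q where PQ: "\<And>f. f \<in> H - {e} \<Longrightarrow>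
      P f \<le> d \<and> Q f \<le> d \<and> P f \<noteq> Q f \<and> e (P f) \<noteq> f (P f) \<and> e (Q f) \<noteq> f (Q f)"
    by metis
  define F where "F f = {a \<in> antipodes d e. a (P f) = f (P f) \<and> a (Q f) = f (Q f)}" for f
  have cover: "antipodes d e \<subseteq> (\<Union>f\<in>H - {e}. F f)"
  proof
    fix a assume a: "a \<in> antipodes d e"
    then obtain f where f: "f \<in> H - {e}" "\<forall>k\<le>d. f k = e k \<or> f k = a k"
      using antipodal_box_contains_edge[OF oct fin eH] by blast
    moreover have "a (P f) = f (P f)" "a (Q f) = f (Q f)"
      using f(2) PQ[OF f(1)] by metis+
    ultimately show "a \<in> (\<Union>f\<in>H - {e}. F f)"
      using a by (auto simp: F_def)
  qed
  have "finite (\<Union>f\<in>H - {e}. F f)"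
    by (rule finite_subset[of _ "antipodes d e"]) (auto simp: F_def antipodes_def finite_PiE)
  then have "d ^ (d + 1) \<le> card (\<Union>f\<in>H - {e}. F f)"
    using card_mono[OF _ cover] card_antipodes[OF e_edge] by simp
  also have "\<dots> \<le> (\<Sum>f\<in>H - {e}. card (F f))"
    using fin by (intro card_UN_le) simp
  also have "\<dots> \<le> (\<Sum>f\<in>H - {e}. d ^ (d - 1))"
    using PQ antipodes_through_edge_le[OF e_edge] by (intro sum_mono) (simp add: F_def)
  also have "\<dots> = (card H - 1) * d ^ (d - 1)"
    using fin eH by simp
  finally have "d ^ 2 * d ^ (d - 1) \<le> (card H - 1) * d ^ (d - 1)"
    using d by (simp add: power_add[symmetric])
  then have "d ^ 2 \<le> card H - 1" using d by simp
  moreover have "card H \<ge> 1" using fin eH by (metis One_nat_def Suc_leI card_gt_0_iff empty_iff)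
  ultimately show ?thesis by linarith
qed

theorem lemma2:
  fixes d :: nat and H :: "(nat \<Rightarrow> nat) set"
  assumes "d \<ge> 1"
    and "octahedral_system d H"
    and "card H \<le> d ^ 2"
  shows "\<forall>e\<in>H. \<exists>f\<in>H. f \<noteq> e \<and> differ_in_one d e f"
proof
  fix e assume "e \<in> H"
  show "\<exists>f\<in>H. f \<noteq> e \<and> differ_in_one d e f"
  proof (rule ccontr)
    assume "\<not> ?thesis"
    with \<open>e \<in> H\<close> have "isolated d H e" by (simp add: isolated_def)
    with assms(1,2) have "d ^ 2 < card H" by (rule isolated_edge_forces_many_edges)
    with assms(3) show False by simp
  qed
qed

end
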